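(* Let $m,n\in\mathbb{N}$ and $\epsilon>0$. Let $\Gamma\subseteq\mathbb{Z}_n$ and let $f:\mathbb{Z}_n\to\mathbb{C}$ be a $|\Gamma|$-sparse function of the form $f(x)=\sum_{\alpha\in\Gamma}\widehat f(\alpha)\chi_\alpha(x)$. Let $\ell:=\min(n,m)$ and let $g:\mathbb{Z}_m\to\mathbb{C}$ be defined by $g(x)=f(x)$ for $0\le x<\ell$ and $g(x)=0$ otherwise. Let $r=|\Gamma|\,\|f\|_2^2/(2\epsilon)$ and $\Gamma'=\bigcup_{\alpha\in\Gamma}\{\beta\in\mathbb{Z}_m:|\frac mn\alpha-\beta|_m\le r+1\}$. Then $\|g-g|_{\Gamma'}\|_2^2\le\epsilon$.
   Context: $\mathbb{Z}_n=\{0,\dots,n-1\}$ with addition mod $n$; elements are treated as these integer representatives. For $h:\mathbb{Z}_n\to\mathbb{C}$: $\langle h_1,h_2\rangle=\frac1n\sum_x h_1(x)\overline{h_2(x)}$, $\|h\|_2^2=\langle h,h\rangle$, $\chi_\alpha(x)=\exp(2\pi i\alpha x/n)$, $\widehat h(\alpha)=\langle h,\chi_\alpha\rangle$; analogously on $\mathbb{Z}_m$ with $m$ in place of $n$. For $\Gamma'\subseteq\mathbb{Z}_m$ and $h:\mathbb{Z}_m\to\mathbb{C}$, $h|_{\Gamma'}=\sum_{\beta\in\Gamma'}\widehat h(\beta)\chi_{\beta,m}$. For $k\in\mathbb{N}$, $x\in\mathbb{R}$: $|x|_k=\min\{|x-kz|:z\in\mathbb{Z}\}$. *)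

theory Defs
  imports Complex_Main
begin

text \<open>Z_n is represented by the natural numbers 0..<n; functions Z_n -> C are
  functions nat => complex of which only the values on {0..<n} matter.\<close>

definition inner_Z :: "nat \<Rightarrow> (nat \<Rightarrow> complex) \<Rightarrow> (nat \<Rightarrow> complex) \<Rightarrow> complex" where
  "inner_Z n h1 h2 = (\<Sum>x<n. h1 x * cnj (h2 x)) / of_nat n"

definition norm2sq_Z :: "nat \<Rightarrow> (nat \<Rightarrow> complex) \<Rightarrow> real" where
  "norm2sq_Z n h = (\<Sum>x<n. (cmod (h x))^2) / real n"

definition chi :: "nat \<Rightarrow> nat \<Rightarrow> nat \<Rightarrow> complex" where
  "chi n \<alpha> x = exp (2 * of_real pi * \<i> * of_nat \<alpha> * of_nat x / of_nat n)"

definition fourier :: "nat \<Rightarrow> (nat \<Rightarrow> complex) \<Rightarrow> nat \<Rightarrow> complex" where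
  "fourier n h \<alpha> = inner_Z n h (chi n \<alpha>)"

definition restrict_freq :: "nat \<Rightarrow> nat set \<Rightarrow> (nat \<Rightarrow> complex) \<Rightarrow> nat \<Rightarrow> complex" where
  "restrict_freq m \<Gamma>' h x = (\<Sum>\<beta>\<in>\<Gamma>'. fourier m h \<beta> * chi m \<beta> x)"

definition dist_mod :: "nat \<Rightarrow> real \<Rightarrow> real" where
  "dist_mod k x = Inf {\<bar>x - real k * of_int z\<bar> | z. True}"

end

theory Submission
  imports Defs "HOL-Analysis.Analysis" "HOL-Library.Real_Mod"
begin

text \<open>Let C(\<alpha>, \<beta>) be the Fourier coefficient at \<beta> on Z_m of the character \<chi>_\<alpha> of Z_n
  truncated to [0, l), so that the coefficient of g at \<beta> is the sum over \<alpha> \<in> \<Gamma> of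
  fourier n f \<alpha> * C(\<alpha>, \<beta>). Now C(\<alpha>, \<beta>) is a geometric sum with ratio exp(2\<pi>i(\<alpha>/n - \<beta>/m)), so
  Jordan's inequality gives |C(\<alpha>, \<beta>)| \<le> 1/(2|m\<alpha>/n - \<beta>|_m). By Parseval the residual is the
  energy of g at the frequencies outside \<Gamma>', and Cauchy-Schwarz bounds it by |\<Gamma>| ||f||^2 times
  the sum of 1/(4|t - \<beta>|_m^2) over the \<beta> farther than r + 1 from t = m\<alpha>/n. Comparing with
  the telescoping sums of 1/(k - 1/2) - 1/(k + 1/2) on either side of t bounds this sum by
  1/(2r + 1), and |\<Gamma>| ||f||^2/(2r + 1) = 2\<epsilon>r/(2r + 1) \<le> \<epsilon>.\<close>

lemma jordan_sin_ge:
  fixes x :: real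
  assumes "0 \<le> x" "x \<le> pi / 2"
  shows "2 / pi * x \<le> sin x"
proof -
  have "convex_on {0..pi/2} (\<lambda>x. - sin x)"
  proof (rule convex_on_realI[where f' = "\<lambda>x. - cos x"])
    show "((\<lambda>x. - sin x) has_real_derivative - cos x) (at x)" for x
      by (auto intro!: derivative_eq_intros)
    show "- cos x \<le> - cos y" if "x \<in> {0..pi/2}" "y \<in> {0..pi/2}" "x \<le> y" for x y
      using that cos_mono_le_eq[of y x] by auto
  qed simp
  moreover have "0 \<le> 2 / pi * x" "2 / pi * x \<le> 1"
    using assms pi_gt_zero by (auto simp: field_simps)
  ultimately have "- sin ((1 - 2/pi*x) *\<^sub>R 0 + (2/pi*x) *\<^sub>R (pi/2))
      \<le> (1 - 2/pi*x) * - sin 0 + (2/pi*x) * - sin (pi/2)"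
    by (intro convex_onD[where f = "\<lambda>x. - sin x"]) auto
  then show ?thesis by simp
qed

lemma abs_sin_pi_ge:
  fixes u :: real
  assumes "\<bar>u\<bar> \<le> 1 / 2"
  shows "2 * \<bar>u\<bar> \<le> \<bar>sin (pi * u)\<bar>"
proof -
  have "2 / pi * (pi * \<bar>u\<bar>) \<le> sin (pi * \<bar>u\<bar>)"
    using assms by (intro jordan_sin_ge) auto
  moreover have "sin (pi * \<bar>u\<bar>) \<le> \<bar>sin (pi * u)\<bar>"
    by (cases "u \<ge> 0") auto
  ultimately show ?thesis by simp
qed

lemma norm_cis_minus_one: "cmod (cis (2 * pi * u) - 1) = 2 * \<bar>sin (pi * u)\<bar>"
proof -
  have "(cmod (cis (2 * pi * u) - 1))\<^sup>2 = (cos (2 * (pi * u)) - 1)\<^sup>2 + (sin (2 * (pi * u)))\<^sup>2"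
    by (simp add: cmod_def mult.assoc)
  also have "\<dots> = 2 - 2 * cos (2 * (pi * u))"
    by (simp add: power2_eq_square algebra_simps)
  also have "\<dots> = (2 * \<bar>sin (pi * u)\<bar>)\<^sup>2"
    by (simp add: cos_double_sin power2_eq_square)
  finally show ?thesis
    by (metis abs_ge_zero norm_ge_zero power2_eq_imp_eq zero_le_mult_iff zero_le_numeral)
qed

lemma norm_sum_cis_power_le:
  fixes u :: real
  assumes "\<bar>u\<bar> \<le> 1 / 2" "u \<noteq> 0"
  shows "cmod (\<Sum>x<l. cis (2 * pi * u) ^ x) \<le> 1 / (2 * \<bar>u\<bar>)"
proof -
  let ?w = "cis (2 * pi * u)"
  have w1: "4 * \<bar>u\<bar> \<le> cmod (?w - 1)"
    using abs_sin_pi_ge[OF assms(1)] by (simp add: norm_cis_minus_one)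
  with assms(2) have "?w \<noteq> 1" by auto
  then have "cmod (\<Sum>x<l. ?w ^ x) = cmod (?w ^ l - 1) / cmod (?w - 1)"
    by (simp add: geometric_sum norm_divide)
  also have "\<dots> \<le> 2 / (4 * \<bar>u\<bar>)"
  proof (rule frac_le)
    show "cmod (?w ^ l - 1) \<le> 2"
      using norm_triangle_ineq4[of "?w ^ l" 1] by (simp add: norm_power)
  qed (use w1 assms(2) in auto)
  finally show ?thesis by simp
qed

lemma chi_conv_cis: "chi n a x = cis (2 * pi * real a * real x / real n)"
  by (simp add: chi_def cis_conv_exp mult_ac)

lemma chi_commute: "chi n a x = chi n x a"
  by (simp add: chi_def mult_ac)

lemma chi_mult_cnj_chi:
  "chi n a x * cnj (chi m b x) = cis (2 * pi * (real a / real n - real b / real m)) ^ x"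
  unfolding chi_conv_cis cis_cnj cis_mult Complex.DeMoivre
  by (rule arg_cong[where f = cis]) (simp add: field_simps)

lemma sum_chi_mult_cnj_chi:
  assumes "b < m" "c < m"
  shows "(\<Sum>x<m. chi m b x * cnj (chi m c x)) = (if b = c then of_nat m else 0)"
proof (cases "b = c")
  case False
  let ?w = "cis (2 * pi * (real b / real m - real c / real m))"
  have "?w \<noteq> 1"
  proof
    assume "?w = 1"
    then obtain k :: int where "2 * pi * (real b / real m - real c / real m) = of_int k * (2 * pi)"
      by (auto simp: cis_eq_1_iff)
    then have "real b / real m - real c / real m = of_int k"
      by (metis mult.commute mult_cancel_left mult_eq_0_iff pi_neq_zero zero_neq_numeral)
    then have "real b - real c = real m * of_int k"
      using assms by (simp add: field_simps)
    then have eq: "int b - int c = int m * k"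
      by (metis of_int_eq_iff of_int_mult of_int_diff of_int_of_nat_eq)
    with False have "k \<noteq> 0"
      by auto
    then have "int m * 1 \<le> int m * \<bar>k\<bar>"
      by (intro mult_left_mono) auto
    moreover have "\<bar>int b - int c\<bar> < int m"
      using assms by linarith
    ultimately show False
      by (simp add: eq abs_mult)
  qed
  moreover have "?w ^ m = 1"
    unfolding Complex.DeMoivre cis_eq_1_iff using assms
    by (intro exI[of _ "int b - int c"]) (simp add: diff_divide_distrib[symmetric])
  ultimately show ?thesis
    using False by (simp add: chi_mult_cnj_chi geometric_sum)
qed (simp add: chi_mult_cnj_chi)

lemma norm2sq_Z_cong: "(\<And>x. x < m \<Longrightarrow> h x = h' x) \<Longrightarrow> norm2sq_Z m h = norm2sq_Z m h'"
  unfolding norm2sq_Z_def by (intro arg_cong2[where f = "(/)"] sum.cong) auto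

lemma norm2sq_Z_sum_chi:
  assumes "m > 0" "B \<subseteq> {..<m}"
  shows "norm2sq_Z m (\<lambda>x. \<Sum>b\<in>B. c b * chi m b x) = (\<Sum>b\<in>B. (cmod (c b))\<^sup>2)"
proof -
  have fin: "finite B"
    using assms(2) finite_subset by blast
  have "complex_of_real (\<Sum>x<m. (cmod (\<Sum>b\<in>B. c b * chi m b x))\<^sup>2)
     = (\<Sum>x<m. \<Sum>b\<in>B. \<Sum>d\<in>B. c b * cnj (c d) * (chi m b x * cnj (chi m d x)))"
    by (simp only: of_real_sum complex_norm_square cnj_sum complex_cnj_mult sum_product mult_ac)
  also have "\<dots> = (\<Sum>b\<in>B. \<Sum>d\<in>B. c b * cnj (c d) * (\<Sum>x<m. chi m b x * cnj (chi m d x)))"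
    by (simp only: sum_distrib_left) (subst sum.swap, intro sum.cong refl sum.swap)
  also have "\<dots> = (\<Sum>b\<in>B. \<Sum>d\<in>B. c b * cnj (c d) * (if b = d then of_nat m else 0))"
    using assms by (intro sum.cong refl) (auto simp: sum_chi_mult_cnj_chi subset_iff)
  also have "\<dots> = (\<Sum>b\<in>B. of_nat m * (c b * cnj (c b)))"
    using fin by (simp add: if_distrib sum.delta mult_ac cong: if_cong)
  also have "\<dots> = complex_of_real (real m * (\<Sum>b\<in>B. (cmod (c b))\<^sup>2))"
    by (simp only: complex_norm_square of_real_mult of_real_sum of_real_of_nat_eq sum_distrib_left)
  finally show ?thesis
    using assms(1) unfolding norm2sq_Z_def of_real_eq_iff by simp
qed

lemma fourier_inversion:
  assumes "x < m"
  shows "h x = (\<Sum>b<m. fourier m h b * chi m b x)"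
proof -
  have "fourier m h b * chi m b x = (\<Sum>y<m. h y * (chi m x b * cnj (chi m y b))) / of_nat m" for b
    by (simp add: fourier_def inner_Z_def sum_distrib_right chi_commute[of m b] sum_distrib_left mult_ac)
  then have "(\<Sum>b<m. fourier m h b * chi m b x)
      = (\<Sum>b<m. \<Sum>y<m. h y * (chi m x b * cnj (chi m y b))) / of_nat m"
    by (simp add: sum_divide_distrib)
  also have "\<dots> = (\<Sum>y<m. h y * (\<Sum>b<m. chi m x b * cnj (chi m y b))) / of_nat m"
    by (subst sum.swap) (simp only: sum_distrib_left)
  also have "\<dots> = h x"
    using assms by (simp add: sum_chi_mult_cnj_chi if_distrib sum.delta cong: if_cong)
  finally show ?thesis by simp
qed

lemma fourier_sum:
  "fourier m (\<lambda>x. \<Sum>a\<in>A. c a * h a x) b = (\<Sum>a\<in>A. c a * fourier m (h a) b)"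
  unfolding fourier_def inner_Z_def
  by (simp add: sum_distrib_right sum_distrib_left sum_divide_distrib mult.assoc flip: sum.swap[of _ A])

lemma norm2sq_Z_sub_restrict_freq:
  assumes "m > 0" "G \<subseteq> {..<m}"
  shows "norm2sq_Z m (\<lambda>x. h x - restrict_freq m G h x)
           = (\<Sum>b\<in>{..<m} - G. (cmod (fourier m h b))\<^sup>2)"
proof -
  have "h x - restrict_freq m G h x = (\<Sum>b\<in>{..<m} - G. fourier m h b * chi m b x)" if "x < m" for x
    using fourier_inversion[OF that, of h] sum.subset_diff[OF assms(2), of "\<lambda>b. fourier m h b * chi m b x"]
    by (simp add: restrict_freq_def)
  then show ?thesis
    using assms by (simp add: norm2sq_Z_cong[of m _ "\<lambda>x. \<Sum>b\<in>{..<m} - G. _ b * chi m b x"] norm2sq_Z_sum_chi)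
qed

lemma dist_mod_eq_round:
  assumes "m > 0"
  shows "dist_mod m x = real m * \<bar>x / real m - of_int (round (x / real m))\<bar>"
proof -
  have scale: "\<bar>x - real m * of_int z\<bar> = real m * \<bar>x / real m - of_int z\<bar>" for z
  proof -
    have "x - real m * of_int z = real m * (x / real m - of_int z)"
      using assms by (simp add: field_simps)
    then show ?thesis by (simp add: abs_mult)
  qed
  show ?thesis
    unfolding dist_mod_def
  proof (rule cInf_eq_minimum)
    show "real m * \<bar>x / real m - of_int (round (x / real m))\<bar> \<in> {\<bar>x - real m * of_int z\<bar> |z. True}"
      by (auto simp: scale)
    show "real m * \<bar>x / real m - of_int (round (x / real m))\<bar> \<le> y"
      if "y \<in> {\<bar>x - real m * of_int z\<bar> |z. True}" for y
      using that round_diff_minimal by (auto simp: scale intro!: mult_left_mono)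
  qed
qed

lemma inverse_square_le_diff:
  fixes a :: real
  assumes "a > 1 / 2"
  shows "1 / a\<^sup>2 \<le> 1 / (a - 1 / 2) - 1 / (a + 1 / 2)"
proof -
  have sq: "a\<^sup>2 > 1 / 4"
    using power_strict_mono[of "1 / 2" a 2] assms by (simp add: power_divide)
  have "1 / (a - 1 / 2) - 1 / (a + 1 / 2) = 1 / (a\<^sup>2 - 1 / 4)"
    using assms by (simp add: field_simps power2_eq_square)
  moreover have "1 / a\<^sup>2 \<le> 1 / (a\<^sup>2 - 1 / 4)"
    using sq by (intro divide_left_mono) (auto intro!: mult_pos_pos)
  ultimately show ?thesis by simp
qed

lemma sum_inverse_square_gt_le:
  fixes S :: "int set" and t R :: real
  assumes "finite S" "R > 1 / 2" "\<forall>b\<in>S. of_int b - t > R"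
  shows "(\<Sum>b\<in>S. 1 / (of_int b - t)\<^sup>2) \<le> 1 / (R - 1 / 2)"
proof -
  define b0 where "b0 = \<lceil>t + R\<rceil>"
  define K where "K = (\<lambda>b. nat (b - b0)) ` S"
  define f where "f = (\<lambda>k::nat. 1 / (of_int b0 + real k - t - 1 / 2))"
  have b0: "of_int b0 \<ge> t + R"
    unfolding b0_def by (rule le_of_int_ceiling)
  have S: "S = (\<lambda>k. b0 + int k) ` K"
    using assms(3) by (force simp: K_def image_image b0_def ceiling_le_iff)
  obtain N where N: "\<forall>k\<in>K. k < N"
    using assms(1) finite_nat_set_iff_bounded unfolding K_def by blast
  have "(\<Sum>b\<in>S. 1 / (of_int b - t)\<^sup>2) = (\<Sum>k\<in>K. 1 / (of_int b0 + real k - t)\<^sup>2)"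
    unfolding S by (subst sum.reindex) (auto simp: inj_on_def)
  also have "\<dots> \<le> (\<Sum>k<N. 1 / (of_int b0 + real k - t)\<^sup>2)"
    using N by (intro sum_mono2) auto
  also have "\<dots> \<le> (\<Sum>k<N. f k - f (Suc k))"
  proof (intro sum_mono)
    fix k
    have "1 / (of_int b0 + real k - t)\<^sup>2
        \<le> 1 / ((of_int b0 + real k - t) - 1 / 2) - 1 / ((of_int b0 + real k - t) + 1 / 2)"
      using b0 assms(2) by (intro inverse_square_le_diff) simp
    then show "1 / (of_int b0 + real k - t)\<^sup>2 \<le> f k - f (Suc k)"
      unfolding f_def by (simp add: algebra_simps)
  qed
  also have "\<dots> = f 0 - f N"
    by (rule sum_lessThan_telescope')
  also have "\<dots> \<le> f 0"
    using b0 assms(2) by (simp add: f_def)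
  also have "\<dots> \<le> 1 / (R - 1 / 2)"
    using b0 assms(2) unfolding f_def by (intro divide_left_mono) auto
  finally show ?thesis .
qed

lemma sum_inverse_square_abs_gt_le:
  fixes S :: "int set" and t R :: real
  assumes "finite S" "R > 1 / 2" "\<forall>c\<in>S. \<bar>of_int c - t\<bar> > R"
  shows "(\<Sum>c\<in>S. 1 / (of_int c - t)\<^sup>2) \<le> 2 / (R - 1 / 2)"
proof -
  let ?U = "{c\<in>S. of_int c > t}" and ?L = "{c\<in>S. of_int c \<le> t}"
  have "(\<Sum>c\<in>?U. 1 / (of_int c - t)\<^sup>2) \<le> 1 / (R - 1 / 2)"
    using assms by (intro sum_inverse_square_gt_le) auto
  moreover have "(\<Sum>c\<in>?L. 1 / (of_int c - t)\<^sup>2) = (\<Sum>c\<in>uminus ` ?L. 1 / (of_int c - (- t))\<^sup>2)"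
    by (subst sum.reindex) (auto simp: inj_on_def power2_commute)
  moreover have "\<dots> \<le> 1 / (R - 1 / 2)"
    using assms by (intro sum_inverse_square_gt_le) auto
  moreover have "(\<Sum>c\<in>S. 1 / (of_int c - t)\<^sup>2)
      = (\<Sum>c\<in>?U. 1 / (of_int c - t)\<^sup>2) + (\<Sum>c\<in>?L. 1 / (of_int c - t)\<^sup>2)"
    using assms(1) by (subst sum.union_disjoint[symmetric]) (auto intro: sum.cong)
  ultimately show ?thesis by simp
qed

lemma sum_inverse_dist_mod_square_le:
  fixes t R :: real
  assumes "m > 0" "R > 1 / 2" "B \<subseteq> {..<m}" "\<forall>b\<in>B. dist_mod m (t - real b) > R"
  shows "(\<Sum>b\<in>B. 1 / (4 * (dist_mod m (t - real b))\<^sup>2)) \<le> 1 / (2 * R - 1)"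
proof -
  \<comment> \<open>the integer congruent to \<open>b\<close> modulo \<open>m\<close> that is nearest to \<open>t\<close>\<close>
  define rep where "rep = (\<lambda>b::nat. int b + int m * round ((t - real b) / real m))"
  have dist: "dist_mod m (t - real b) = \<bar>of_int (rep b) - t\<bar>" for b
  proof -
    have "dist_mod m (t - real b)
        = \<bar>real m * ((t - real b) / real m - of_int (round ((t - real b) / real m)))\<bar>"
      by (simp only: dist_mod_eq_round[OF assms(1)] abs_mult abs_of_nat)
    also have "\<dots> = \<bar>t - of_int (rep b)\<bar>"
      using assms(1) by (intro arg_cong[where f = abs]) (simp add: rep_def field_simps)
    finally show ?thesis
      by (simp add: abs_minus_commute)
  qed
  have "inj_on rep B"
  proof (rule inj_onI)
    fix b c assume "b \<in> B" "c \<in> B" "rep b = rep c"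
    then have "rep b mod int m = rep c mod int m" by simp
    moreover have "b < m" "c < m"
      using \<open>b \<in> B\<close> \<open>c \<in> B\<close> assms(3) by auto
    ultimately show "b = c"
      by (simp add: rep_def flip: zmod_int)
  qed
  then have "(\<Sum>b\<in>B. 1 / (4 * (dist_mod m (t - real b))\<^sup>2))
      = (\<Sum>c\<in>rep ` B. 1 / (of_int c - t)\<^sup>2) / 4"
    by (simp add: sum.reindex sum_divide_distrib dist mult.commute)
  also have "\<dots> \<le> 2 / (R - 1 / 2) / 4"
    using assms(2-4) by (intro divide_right_mono sum_inverse_square_abs_gt_le) (auto simp: dist finite_subset)
  also have "\<dots> = 1 / (2 * R - 1)"
    using assms(2) by (simp add: field_simps)
  finally show ?thesis .
qed

lemma norm_fourier_truncated_chi_le: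
  assumes "m > 0" "n > 0" "dist_mod m (real m / real n * real a - real b) > 0"
  shows "cmod (fourier m (\<lambda>x. if x < l then chi n a x else 0) b)
           \<le> 1 / (2 * dist_mod m (real m / real n * real a - real b))"
proof -
  define X where "X = real m / real n * real a - real b"
  \<comment> \<open>\<open>\<alpha>/n - \<beta>/m\<close> reduced to \<open>[-1/2, 1/2]\<close>\<close>
  define u where "u = X / real m - of_int (round (X / real m))"
  have dist: "dist_mod m X = real m * \<bar>u\<bar>"
    using assms(1) by (simp add: dist_mod_eq_round u_def)
  have u: "\<bar>u\<bar> \<le> 1 / 2" "u \<noteq> 0"
    using of_int_round_abs_le[of "X / real m"] assms(3) dist by (auto simp: u_def X_def abs_minus_commute)
  have "real a / real n - real b / real m = u + of_int (round (X / real m))"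
    using assms(1,2) by (simp add: u_def X_def field_simps)
  then have "cis (2 * pi * (real a / real n - real b / real m)) = cis (2 * pi * u)"
    by (simp add: distrib_left flip: cis_mult)
  then have "(\<Sum>x<m. (if x < l then chi n a x else 0) * cnj (chi m b x))
      = (\<Sum>x<min l m. cis (2 * pi * u) ^ x)"
    by (intro sum.mono_neutral_cong_right) (auto simp: chi_mult_cnj_chi)
  then have "cmod (fourier m (\<lambda>x. if x < l then chi n a x else 0) b)
      = cmod (\<Sum>x<min l m. cis (2 * pi * u) ^ x) / real m"
    by (simp add: fourier_def inner_Z_def norm_divide)
  also have "\<dots> \<le> 1 / (2 * \<bar>u\<bar>) / real m"
    using norm_sum_cis_power_le[OF u] by (intro divide_right_mono) auto
  also have "\<dots> = 1 / (2 * dist_mod m X)"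
    by (simp add: dist mult_ac)
  finally show ?thesis
    unfolding X_def .
qed

lemma sum_far_fourier_truncated_chi_le:
  assumes "m > 0" "n > 0" "R > 1 / 2" "B \<subseteq> {..<m}"
    and "\<forall>b\<in>B. dist_mod m (real m / real n * real a - real b) > R"
  shows "(\<Sum>b\<in>B. (cmod (fourier m (\<lambda>x. if x < l then chi n a x else 0) b))\<^sup>2)
           \<le> 1 / (2 * R - 1)"
proof -
  have "(\<Sum>b\<in>B. (cmod (fourier m (\<lambda>x. if x < l then chi n a x else 0) b))\<^sup>2)
      \<le> (\<Sum>b\<in>B. 1 / (4 * (dist_mod m (real m / real n * real a - real b))\<^sup>2))"
  proof (intro sum_mono)
    fix b assume "b \<in> B"
    then have "dist_mod m (real m / real n * real a - real b) > 0"
      using assms(3,5) by force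
    then have "(cmod (fourier m (\<lambda>x. if x < l then chi n a x else 0) b))\<^sup>2
        \<le> (1 / (2 * dist_mod m (real m / real n * real a - real b)))\<^sup>2"
      using assms(1,2) by (intro power_mono norm_fourier_truncated_chi_le) auto
    then show "(cmod (fourier m (\<lambda>x. if x < l then chi n a x else 0) b))\<^sup>2
        \<le> 1 / (4 * (dist_mod m (real m / real n * real a - real b))\<^sup>2)"
      by (simp add: power_divide power_mult_distrib)
  qed
  also have "\<dots> \<le> 1 / (2 * R - 1)"
    using assms by (intro sum_inverse_dist_mod_square_le) auto
  finally show ?thesis .
qed

lemma norm_sum_mult_squared_le:
  "(cmod (\<Sum>a\<in>A. c a * d a))\<^sup>2 \<le> card A * (\<Sum>a\<in>A. (cmod (c a))\<^sup>2 * (cmod (d a))\<^sup>2)"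
proof -
  have "(cmod (\<Sum>a\<in>A. c a * d a))\<^sup>2 \<le> (\<Sum>a\<in>A. cmod (c a) * cmod (d a))\<^sup>2"
    using norm_sum[of "\<lambda>a. c a * d a" A] by (intro power_mono) (auto simp: norm_mult)
  also have "\<dots> \<le> (\<Sum>a\<in>A. (cmod (c a) * cmod (d a))\<^sup>2) * card A"
    by (rule sum_squared_le_sum_of_squares)
  finally show ?thesis
    by (simp add: power_mult_distrib mult.commute)
qed

lemma sum_norm_fourier_sum_squared_le:
  assumes "\<forall>a\<in>A. (\<Sum>b\<in>B. (cmod (fourier m (h a) b))\<^sup>2) \<le> \<delta>"
  shows "(\<Sum>b\<in>B. (cmod (fourier m (\<lambda>x. \<Sum>a\<in>A. c a * h a x) b))\<^sup>2)
           \<le> card A * (\<Sum>a\<in>A. (cmod (c a))\<^sup>2) * \<delta>"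
proof -
  have "(\<Sum>b\<in>B. (cmod (fourier m (\<lambda>x. \<Sum>a\<in>A. c a * h a x) b))\<^sup>2)
      \<le> (\<Sum>b\<in>B. card A * (\<Sum>a\<in>A. (cmod (c a))\<^sup>2 * (cmod (fourier m (h a) b))\<^sup>2))"
    unfolding fourier_sum by (intro sum_mono norm_sum_mult_squared_le)
  also have "\<dots> = card A * (\<Sum>a\<in>A. (cmod (c a))\<^sup>2 * (\<Sum>b\<in>B. (cmod (fourier m (h a) b))\<^sup>2))"
    by (simp add: sum_distrib_left sum.swap[of _ B])
  also have "\<dots> \<le> card A * (\<Sum>a\<in>A. (cmod (c a))\<^sup>2 * \<delta>)"
    using assms by (intro mult_left_mono sum_mono) auto
  finally show ?thesis
    by (simp add: sum_distrib_right mult.assoc)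
qed

theorem proposition4p2:
  fixes m n :: nat and \<epsilon> :: real and \<Gamma> :: "nat set" and f :: "nat \<Rightarrow> complex"
  assumes "n > 0" and "m > 0" and "\<epsilon> > 0"
    and "\<Gamma> \<subseteq> {0..<n}"
    and "\<forall>x<n. f x = (\<Sum>\<alpha>\<in>\<Gamma>. fourier n f \<alpha> * chi n \<alpha> x)"
  shows "let l = min n m;
             g = (\<lambda>x. if x < l then f x else 0);
             r = real (card \<Gamma>) * norm2sq_Z n f / (2 * \<epsilon>);
             \<Gamma>' = {\<beta> \<in> {0..<m}. \<exists>\<alpha>\<in>\<Gamma>.
                     dist_mod m (real m / real n * real \<alpha> - real \<beta>) \<le> r + 1}
         in norm2sq_Z m (\<lambda>x. g x - restrict_freq m \<Gamma>' g x) \<le> \<epsilon>"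
proof -
  define l where "l = min n m"
  define g where "g = (\<lambda>x. if x < l then f x else 0)"
  define r where "r = real (card \<Gamma>) * norm2sq_Z n f / (2 * \<epsilon>)"
  define \<Gamma>' where
    "\<Gamma>' = {\<beta> \<in> {0..<m}. \<exists>\<alpha>\<in>\<Gamma>. dist_mod m (real m / real n * real \<alpha> - real \<beta>) \<le> r + 1}"
  define trunc where "trunc = (\<lambda>\<alpha> x. if x < l then chi n \<alpha> x else 0)"
  have g_sum: "g = (\<lambda>x. \<Sum>\<alpha>\<in>\<Gamma>. fourier n f \<alpha> * trunc \<alpha> x)"
    using assms(5) by (intro ext) (auto simp: g_def l_def trunc_def)
  have parseval: "(\<Sum>\<alpha>\<in>\<Gamma>. (cmod (fourier n f \<alpha>))\<^sup>2) = norm2sq_Z n f"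
    using assms by (simp add: norm2sq_Z_cong[of n f] norm2sq_Z_sum_chi atLeast0LessThan)
  have "r \<ge> 0"
    using assms(3) by (simp add: r_def norm2sq_Z_def sum_nonneg)
  have tail:
    "(\<Sum>\<beta>\<in>{..<m} - \<Gamma>'. (cmod (fourier m (trunc \<alpha>) \<beta>))\<^sup>2) \<le> 1 / (2 * (r + 1) - 1)"
    if "\<alpha> \<in> \<Gamma>" for \<alpha>
    unfolding trunc_def
    by (rule sum_far_fourier_truncated_chi_le[OF assms(2,1)])
      (use that \<open>r \<ge> 0\<close> in \<open>auto simp: \<Gamma>'_def not_le\<close>)
  have "norm2sq_Z m (\<lambda>x. g x - restrict_freq m \<Gamma>' g x)
      = (\<Sum>\<beta>\<in>{..<m} - \<Gamma>'. (cmod (fourier m g \<beta>))\<^sup>2)"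
    using assms(2) by (rule norm2sq_Z_sub_restrict_freq) (auto simp: \<Gamma>'_def)
  also have "\<dots> \<le> card \<Gamma> * (\<Sum>\<alpha>\<in>\<Gamma>. (cmod (fourier n f \<alpha>))\<^sup>2) * (1 / (2 * (r + 1) - 1))"
    unfolding g_sum by (rule sum_norm_fourier_sum_squared_le) (use tail in blast)
  also have "\<dots> = 2 * \<epsilon> * r / (2 * r + 1)"
    using assms(3) by (simp add: parseval r_def algebra_simps)
  also have "\<dots> \<le> \<epsilon>"
    using assms(3) \<open>r \<ge> 0\<close> by (simp add: divide_le_eq)
  finally show ?thesis
    unfolding Let_def l_def g_def r_def \<Gamma>'_def .
qed

end
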